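(* Let $G$ be a finite group, $n\ge 2$, put $g_1=1$, and let $g_2,\dots,g_n\in G$ be nontrivial elements (possibly with repetitions). Let $S=\mathscr M(G,n,n,C)$ where $C$ is the $n\times n$ matrix with $C_{ii}=g_i$ for all $i$ and $C_{ij}=1$ for $i\ne j$. Then both the minimal degree of a faithful action of $S$ by partial transformations and by total transformations equal $$\min\Big\{n\cdot|X|-\sum_{x\in X}\big|\{2\le i\le n\mid g_i\in G_x\}\big|\Big\},$$ where $X$ runs over all faithful right $G$-sets (equivalently, all faithful $G$-sets with no two isomorphic orbits) and $G_x$ is the stabilizer of $x$. In particular, if $g_2=\cdots=g_n=g\ne1$, both minimal degrees equal $\min\{n\deg(\rho)-(n-1)|\mathrm{Fix}(\rho(g))|\}$ as $\rho$ runs over all faithful permutation representations of $G$ (equivalently, those with no two isomorphic orbits).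
   Context: For a group $G$ and matrix $C\colon[n]\times[n]\to G$, the Rees matrix semigroup $\mathscr M(G,n,n,C)$ is $[n]\times G\times[n]$ with $(i,g,j)(k,h,l)=(i,gC_{jk}h,l)$. The minimal degree of a faithful action by partial (resp. total) transformations is the least $m$ such that $S$ embeds in the monoid of partial (resp. total) maps of an $m$-set acting on the right. $\mathrm{Fix}(\rho(g))$ is the set of points fixed by $\rho(g)$; $\deg(\rho)$ is the number of points. *)

theory Defs
  imports "HOL-Algebra.Group"
begin

definition rees_carrier :: "('a, 'b) monoid_scheme \<Rightarrow> nat \<Rightarrow> (nat \<times> 'a \<times> nat) set" where
  "rees_carrier G n = {1..n} \<times> carrier G \<times> {1..n}"

definition rees_mult ::
  "('a, 'b) monoid_scheme \<Rightarrow> (nat \<Rightarrow> nat \<Rightarrow> 'a) \<Rightarrow> nat \<times> 'a \<times> nat \<Rightarrow> nat \<times> 'a \<times> nat \<Rightarrow> nat \<times> 'a \<times> nat" where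
  "rees_mult G C s t = (case s of (i, g, j) \<Rightarrow> case t of (k, h, l) \<Rightarrow>
      (i, g \<otimes>\<^bsub>G\<^esub> C j k \<otimes>\<^bsub>G\<^esub> h, l))"

definition is_partial_transf :: "nat \<Rightarrow> (nat \<Rightarrow> nat option) \<Rightarrow> bool" where
  "is_partial_transf m f \<longleftrightarrow> (\<forall>x. (x \<ge> m \<longrightarrow> f x = None) \<and> (\<forall>y. f x = Some y \<longrightarrow> y < m))"

definition pcomp :: "(nat \<Rightarrow> nat option) \<Rightarrow> (nat \<Rightarrow> nat option) \<Rightarrow> nat \<Rightarrow> nat option" where
  "pcomp f g = (\<lambda>x. Option.bind (f x) g)"

definition is_total_transf :: "nat \<Rightarrow> (nat \<Rightarrow> nat) \<Rightarrow> bool" where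
  "is_total_transf m f \<longleftrightarrow> (\<forall>x. (x < m \<longrightarrow> f x < m) \<and> (x \<ge> m \<longrightarrow> f x = x))"

definition min_partial_degree :: "'s set \<Rightarrow> ('s \<Rightarrow> 's \<Rightarrow> 's) \<Rightarrow> nat" where
  "min_partial_degree S smul = (LEAST m. \<exists>\<phi>. (\<forall>s\<in>S. is_partial_transf m (\<phi> s)) \<and> inj_on \<phi> S \<and>
       (\<forall>s\<in>S. \<forall>t\<in>S. \<phi> (smul s t) = pcomp (\<phi> s) (\<phi> t)))"

definition min_total_degree :: "'s set \<Rightarrow> ('s \<Rightarrow> 's \<Rightarrow> 's) \<Rightarrow> nat" where
  "min_total_degree S smul = (LEAST m. \<exists>\<phi>. (\<forall>s\<in>S. is_total_transf m (\<phi> s)) \<and> inj_on \<phi> S \<and>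
       (\<forall>s\<in>S. \<forall>t\<in>S. \<phi> (smul s t) = \<phi> t \<circ> \<phi> s))"

definition right_action :: "('a, 'b) monoid_scheme \<Rightarrow> 'x set \<Rightarrow> ('x \<Rightarrow> 'a \<Rightarrow> 'x) \<Rightarrow> bool" where
  "right_action G X act \<longleftrightarrow>
     (\<forall>x\<in>X. \<forall>g\<in>carrier G. act x g \<in> X) \<and>
     (\<forall>x\<in>X. act x \<one>\<^bsub>G\<^esub> = x) \<and>
     (\<forall>x\<in>X. \<forall>g\<in>carrier G. \<forall>h\<in>carrier G. act (act x g) h = act x (g \<otimes>\<^bsub>G\<^esub> h))"

definition faithful_right_action :: "('a, 'b) monoid_scheme \<Rightarrow> 'x set \<Rightarrow> ('x \<Rightarrow> 'a \<Rightarrow> 'x) \<Rightarrow> bool" where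
  "faithful_right_action G X act \<longleftrightarrow> right_action G X act \<and>
     (\<forall>g\<in>carrier G. (\<forall>x\<in>X. act x g = x) \<longrightarrow> g = \<one>\<^bsub>G\<^esub>)"

definition stab :: "('a, 'b) monoid_scheme \<Rightarrow> ('x \<Rightarrow> 'a \<Rightarrow> 'x) \<Rightarrow> 'x \<Rightarrow> 'a set" where
  "stab G act x = {g \<in> carrier G. act x g = x}"

end

theory Submission
  imports Defs
begin

text \<open>
  For a faithful right \<open>G\<close>-set \<open>X\<close> let \<open>P(X)\<close> be \<open>X \<times> [n]\<close> with \<open>(x, k)\<close> identified
  with \<open>(x, 1)\<close> whenever \<open>g\<^sub>k\<close> fixes \<open>x\<close>; it has \<open>n |X| - \<Sum>\<^sub>x |{i \<ge> 2. g\<^sub>i \<in> G\<^sub>x}|\<close> points.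
  The semigroup acts on \<open>X \<times> [n]\<close> by \<open>(x, k) (j, a, l) = (x C\<^sub>k\<^sub>j a, l)\<close>, the identification
  is compatible with this action, and the induced action on \<open>P(X)\<close> is faithful because \<open>G\<close>
  acts faithfully and every \<open>g\<^sub>i\<close> with \<open>i \<ge> 2\<close> moves some point.  Conversely, in a faithful
  action by partial maps on \<open>m\<close> points the maximal subgroup \<open>{(1, a, 1)} \<cong> G\<close> acts faithfully
  on the fixed points \<open>X\<close> of the idempotent \<open>(1, 1, 1)\<close>, and \<open>(x, k) \<mapsto> x (1, 1, k)\<close> is
  injective on \<open>P(X)\<close> since \<open>x (1, 1, k) (j, 1, 1) = x C\<^sub>k\<^sub>j\<close>.  As total maps are partial
  maps, both minimal degrees equal the least \<open>|P(X)|\<close>.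
\<close>

section \<open>Faithful representations by transformations\<close>

definition faithful_partial_rep ::
  "'s set \<Rightarrow> ('s \<Rightarrow> 's \<Rightarrow> 's) \<Rightarrow> nat \<Rightarrow> ('s \<Rightarrow> nat \<Rightarrow> nat option) \<Rightarrow> bool" where
  "faithful_partial_rep S smul m \<phi> \<longleftrightarrow> (\<forall>s\<in>S. is_partial_transf m (\<phi> s)) \<and> inj_on \<phi> S \<and>
     (\<forall>s\<in>S. \<forall>t\<in>S. \<phi> (smul s t) = pcomp (\<phi> s) (\<phi> t))"

definition faithful_total_rep ::
  "'s set \<Rightarrow> ('s \<Rightarrow> 's \<Rightarrow> 's) \<Rightarrow> nat \<Rightarrow> ('s \<Rightarrow> nat \<Rightarrow> nat) \<Rightarrow> bool" where
  "faithful_total_rep S smul m \<phi> \<longleftrightarrow> (\<forall>s\<in>S. is_total_transf m (\<phi> s)) \<and> inj_on \<phi> S \<and>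
     (\<forall>s\<in>S. \<forall>t\<in>S. \<phi> (smul s t) = \<phi> t \<circ> \<phi> s)"

lemma faithful_partial_rep_of_total_rep:
  assumes "faithful_total_rep S smul m \<phi>"
  shows "faithful_partial_rep S smul m (\<lambda>s x. if x < m then Some (\<phi> s x) else None)"
    (is "faithful_partial_rep S smul m ?\<psi>")
proof -
  have total: "is_total_transf m (\<phi> s)" if "s \<in> S" for s
    using assms that by (simp add: faithful_total_rep_def)
  have "inj_on ?\<psi> S"
  proof (rule inj_onI)
    fix s t assume s: "s \<in> S" and t: "t \<in> S" and eq: "?\<psi> s = ?\<psi> t"
    have "\<phi> s x = \<phi> t x" for x
      using fun_cong[OF eq, of x] total[OF s] total[OF t]
      by (cases "x < m") (auto simp: is_total_transf_def)
    then have "\<phi> s = \<phi> t" by (rule ext)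
    then show "s = t"
      using assms s t by (auto simp: faithful_total_rep_def inj_on_def)
  qed
  moreover have "?\<psi> (smul s t) = pcomp (?\<psi> s) (?\<psi> t)" if "s \<in> S" "t \<in> S" for s t
    using assms that total by (auto simp: faithful_total_rep_def pcomp_def is_total_transf_def)
  ultimately show ?thesis
    using total by (simp add: faithful_partial_rep_def is_partial_transf_def is_total_transf_def)
qed

lemma faithful_total_rep_of_finite_action:
  fixes A :: "'p \<Rightarrow> 's \<Rightarrow> 'p"
  assumes "finite P"
    and closed: "\<And>p s. p \<in> P \<Longrightarrow> s \<in> S \<Longrightarrow> A p s \<in> P"
    and mult: "\<And>p s t. p \<in> P \<Longrightarrow> s \<in> S \<Longrightarrow> t \<in> S \<Longrightarrow> A (A p s) t = A p (smul s t)"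
    and faithful: "\<And>s s'. s \<in> S \<Longrightarrow> s' \<in> S \<Longrightarrow> (\<And>p. p \<in> P \<Longrightarrow> A p s = A p s') \<Longrightarrow> s = s'"
  shows "\<exists>\<phi>. faithful_total_rep S smul (card P) \<phi>"
proof -
  obtain enc where enc: "bij_betw enc P {0..<card P}"
    using ex_bij_betw_finite_nat[OF \<open>finite P\<close>] by blast
  define dec where "dec = inv_into P enc"
  have dec: "dec y \<in> P" "enc (dec y) = y" if "y < card P" for y
    using that bij_betw_inv_into[OF enc] bij_betw_inv_into_right[OF enc]
    by (auto simp: dec_def bij_betw_apply)
  have enc_dec: "dec (enc p) = p" "enc p < card P" if "p \<in> P" for p
    using that bij_betw_inv_into_left[OF enc] bij_betw_apply[OF enc]
    by (auto simp: dec_def)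
  define \<phi> where "\<phi> s y = (if y < card P then enc (A (dec y) s) else y)" for s y
  have "is_total_transf (card P) (\<phi> s)" if "s \<in> S" for s
    using that closed dec enc_dec by (auto simp: is_total_transf_def \<phi>_def)
  moreover have "inj_on \<phi> S"
  proof (rule inj_onI)
    fix s s' assume s: "s \<in> S" "s' \<in> S" and eq: "\<phi> s = \<phi> s'"
    have "A p s = A p s'" if "p \<in> P" for p
    proof -
      have "enc (A p s) = enc (A p s')"
        using fun_cong[OF eq, of "enc p"] that enc_dec by (simp add: \<phi>_def)
      then show ?thesis
        using enc closed s that by (meson bij_betw_def inj_onD)
    qed
    then show "s = s'" using faithful s by blast
  qed
  moreover have "\<phi> (smul s t) = \<phi> t \<circ> \<phi> s" if "s \<in> S" "t \<in> S" for s t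
    using that closed mult dec enc_dec by (auto simp: \<phi>_def)
  ultimately show ?thesis by (auto simp: faithful_total_rep_def)
qed

lemma min_degrees_eq_Least:
  assumes "Q k\<^sub>0"
    and upper: "\<And>k. Q k \<Longrightarrow> \<exists>\<phi>. faithful_total_rep S smul k \<phi>"
    and lower: "\<And>m \<phi>. faithful_partial_rep S smul m \<phi> \<Longrightarrow> \<exists>k. Q k \<and> k \<le> m"
  shows "min_partial_degree S smul = (LEAST k. Q k) \<and> min_total_degree S smul = (LEAST k. Q k)"
proof -
  have partial: "min_partial_degree S smul = (LEAST m. \<exists>\<phi>. faithful_partial_rep S smul m \<phi>)"
    by (simp add: min_partial_degree_def faithful_partial_rep_def)
  have total: "min_total_degree S smul = (LEAST m. \<exists>\<phi>. faithful_total_rep S smul m \<phi>)"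
    by (simp add: min_total_degree_def faithful_total_rep_def)
  define K where "K = (LEAST k. Q k)"
  have "Q K" unfolding K_def using \<open>Q k\<^sub>0\<close> by (rule LeastI)
  then have "\<exists>\<phi>. faithful_total_rep S smul K \<phi>" by (rule upper)
  then have total_le: "min_total_degree S smul \<le> K"
    and "\<exists>\<phi>. faithful_total_rep S smul (min_total_degree S smul) \<phi>"
    unfolding total by (auto intro: Least_le LeastI)
  then have "\<exists>\<phi>. faithful_partial_rep S smul (min_total_degree S smul) \<phi>"
    using faithful_partial_rep_of_total_rep by blast
  then have partial_le: "min_partial_degree S smul \<le> min_total_degree S smul"
    and "\<exists>\<phi>. faithful_partial_rep S smul (min_partial_degree S smul) \<phi>"
    unfolding partial by (auto intro: Least_le LeastI)
  then obtain k where "Q k" "k \<le> min_partial_degree S smul" using lower by blast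
  then have "K \<le> min_partial_degree S smul" unfolding K_def by (meson Least_le order_trans)
  then show ?thesis using total_le partial_le K_def by simp
qed

section \<open>Right actions of groups\<close>

context group
begin

lemma right_action_inv_cancel:
  assumes "right_action G X act" "x \<in> X" "a \<in> carrier G"
  shows "act (act x a) (inv a) = x" and "act (act x (inv a)) a = x"
  using assms by (simp_all add: right_action_def)

lemma right_action_inj:
  assumes "right_action G X act" "x \<in> X" "y \<in> X" "a \<in> carrier G" "act x a = act y a"
  shows "x = y"
  by (metis assms right_action_inv_cancel(1))

lemma faithful_right_action_moves:
  assumes "faithful_right_action G X act" "a \<in> carrier G" "a \<noteq> \<one>"
  obtains x where "x \<in> X" "act x a \<noteq> x"
  using assms by (auto simp: faithful_right_action_def)

lemma faithful_right_action_eqI: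
  assumes faithful: "faithful_right_action G X act" and "a \<in> carrier G" "b \<in> carrier G"
    and eq: "\<And>x. x \<in> X \<Longrightarrow> act x a = act x b"
  shows "a = b"
proof -
  have action: "right_action G X act"
    using faithful by (simp add: faithful_right_action_def)
  have "act x (a \<otimes> inv b) = x" if "x \<in> X" for x
  proof -
    have "act x (a \<otimes> inv b) = act (act x a) (inv b)"
      using action that \<open>a \<in> carrier G\<close> \<open>b \<in> carrier G\<close> by (simp add: right_action_def)
    also have "\<dots> = act (act x b) (inv b)"
      using eq that by simp
    also have "\<dots> = x"
      using right_action_inv_cancel(1)[OF action that \<open>b \<in> carrier G\<close>] .
    finally show ?thesis .
  qed
  then have "a \<otimes> inv b = \<one>"
    using faithful assms by (simp add: faithful_right_action_def)
  then show ?thesis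
    using assms by (metis inv_closed inv_equality inv_inv)
qed

lemma faithful_right_action_transport:
  assumes faithful: "faithful_right_action G Y act" and h: "bij_betw h Y X"
  shows "faithful_right_action G X (\<lambda>x a. h (act (inv_into Y h x) a))"
proof -
  have action: "right_action G Y act"
    using faithful by (simp add: faithful_right_action_def)
  have preimage: "inv_into Y h x \<in> Y" "h (inv_into Y h x) = x" if "x \<in> X" for x
    using that bij_betw_inv_into[OF h] bij_betw_inv_into_right[OF h] by (auto simp: bij_betw_apply)
  have image: "inv_into Y h (h y) = y" "h y \<in> X" if "y \<in> Y" for y
    using that bij_betw_inv_into_left[OF h] bij_betw_apply[OF h] by auto
  show ?thesis
    using action preimage image
    unfolding faithful_right_action_def right_action_def
  proof (intro conjI ballI impI)
    fix a assume a: "a \<in> carrier G" and triv: "\<forall>x\<in>X. h (act (inv_into Y h x) a) = x"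
    have "act y a = y" if "y \<in> Y" for y
      using triv[rule_format, of "h y"] image[OF that] action a that
      by (metis right_action_def bij_betw_inv_into_left[OF h])
    then show "a = \<one>"
      using faithful a by (simp add: faithful_right_action_def)
  qed (simp_all add: right_action_def)
qed

lemma faithful_right_regular_action: "faithful_right_action G (carrier G) (\<lambda>x a. x \<otimes> a)"
  by (auto simp: faithful_right_action_def right_action_def m_assoc)

lemma finite_faithful_action_on_nat:
  assumes "finite (carrier G)"
  shows "\<exists>(X :: nat set) act. finite X \<and> faithful_right_action G X act"
proof -
  obtain h where "bij_betw h (carrier G) {0..<card (carrier G)}"
    using ex_bij_betw_finite_nat[OF assms] by blast
  then show ?thesis
    using faithful_right_action_transport[OF faithful_right_regular_action] by blast
qed

lemma partial_hom_maps_fixed_points: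
  assumes hom: "\<And>a b. a \<in> carrier G \<Longrightarrow> b \<in> carrier G \<Longrightarrow> E (a \<otimes> b) = pcomp (E a) (E b)"
    and a: "a \<in> carrier G" and x: "E \<one> x = Some x"
  obtains y where "E a x = Some y" "E \<one> y = Some y"
proof -
  have "Option.bind (E a x) (E (inv a)) = Some x"
    using hom[of a "inv a"] a x by (simp add: pcomp_def)
  then obtain y where y: "E a x = Some y" by (cases "E a x") auto
  have "E a x = Option.bind (E a x) (E \<one>)"
    using hom[of a \<one>] a by (metis r_one one_closed pcomp_def)
  then have "E \<one> y = Some y" unfolding y by simp
  with y show ?thesis by (rule that)
qed

lemma partial_hom_eq_one:
  assumes hom: "\<And>a b. a \<in> carrier G \<Longrightarrow> b \<in> carrier G \<Longrightarrow> E (a \<otimes> b) = pcomp (E a) (E b)"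
    and a: "a \<in> carrier G" and fixes_one: "\<And>x. E \<one> x = Some x \<Longrightarrow> E a x = Some x"
  shows "E a = E \<one>"
proof
  fix w
  have left_one: "E a w = Option.bind (E \<one> w) (E a)"
    using hom[of \<one> a] a by (metis l_one one_closed pcomp_def)
  show "E a w = E \<one> w"
  proof (cases "E \<one> w")
    case (Some x)
    have "E \<one> x = Option.bind (E \<one> w) (E \<one>)"
      using Some by simp
    also have "\<dots> = Some x"
      using hom[of \<one> \<one>] Some by (metis l_one one_closed pcomp_def)
    finally have "E \<one> x = Some x" .
    then show ?thesis
      using left_one Some fixes_one by simp
  next
    case None
    then show ?thesis using left_one by simp
  qed
qed

lemma faithful_action_of_partial_hom:
  assumes partial: "\<And>a. a \<in> carrier G \<Longrightarrow> is_partial_transf m (E a)"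
    and hom: "\<And>a b. a \<in> carrier G \<Longrightarrow> b \<in> carrier G \<Longrightarrow> E (a \<otimes> b) = pcomp (E a) (E b)"
    and inj: "inj_on E (carrier G)"
  obtains X act where "X \<subseteq> {..<m}" "faithful_right_action G X act"
    "\<And>a x. a \<in> carrier G \<Longrightarrow> x \<in> X \<Longrightarrow> E a x = Some (act x a)"
proof -
  define X where "X = {x. E \<one> x = Some x}"
  define act where "act x a = the (E a x)" for x a
  have E_act: "E a x = Some (act x a)" "act x a \<in> X" if a: "a \<in> carrier G" and x: "x \<in> X" for a x
  proof -
    obtain y where "E a x = Some y" "E \<one> y = Some y"
      using partial_hom_maps_fixed_points[OF hom a] x unfolding X_def by blast
    then show "E a x = Some (act x a)" "act x a \<in> X"
      by (simp_all add: act_def X_def)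
  qed
  have action: "right_action G X act"
    unfolding right_action_def
  proof (intro conjI ballI)
    fix x a assume "x \<in> X" "a \<in> carrier G"
    then show "act x a \<in> X" by (rule E_act(2)[rotated])
  next
    fix x assume x: "x \<in> X"
    then show "act x \<one> = x" using E_act(1)[OF one_closed x] by (simp add: X_def)
  next
    fix x a b assume x: "x \<in> X" and a: "a \<in> carrier G" and b: "b \<in> carrier G"
    have "Some (act x (a \<otimes> b)) = Option.bind (E a x) (E b)"
      using hom[OF a b] E_act[OF m_closed[OF a b] x] by (simp add: pcomp_def)
    also have "\<dots> = Some (act (act x a) b)"
      using E_act[OF a x] E_act[OF b] by simp
    finally show "act (act x a) b = act x (a \<otimes> b)" by simp
  qed
  have "a = \<one>" if a: "a \<in> carrier G" and trivial: "\<forall>x\<in>X. act x a = x" for a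
  proof -
    have "E a x = Some x" if "E \<one> x = Some x" for x
    proof -
      have "x \<in> X" using that by (simp add: X_def)
      then show ?thesis using E_act(1)[OF a] trivial by simp
    qed
    then have "E a = E \<one>" using partial_hom_eq_one[OF hom a] by blast
    then show ?thesis using inj a by (meson inj_onD one_closed)
  qed
  then have "faithful_right_action G X act"
    using action by (simp add: faithful_right_action_def)
  moreover have "X \<subseteq> {..<m}"
    using partial[OF one_closed] by (auto simp: X_def is_partial_transf_def)
  ultimately show ?thesis
    using E_act(1) that by blast
qed

end

section \<open>Rees matrix semigroups with diagonal sandwich matrix\<close>

locale diagonal_rees = group G for G :: "('a, 'b) monoid_scheme" (structure) +
  fixes n :: nat and g :: "nat \<Rightarrow> 'a" and C :: "nat \<Rightarrow> nat \<Rightarrow> 'a"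
  assumes two_le_n: "2 \<le> n"
    and g_1: "g 1 = \<one>"
    and g_nontrivial: "\<forall>i\<in>{2..n}. g i \<in> carrier G \<and> g i \<noteq> \<one>"
    and C_diagonal: "\<forall>i j. C i j = (if i = j then g i else \<one>)"
begin

text \<open>Simplified goals mention \<open>Suc 0\<close> rather than the numeral \<open>1\<close>,
  hence this form of the simp rules.\<close>

lemma g_Suc_0 [simp]: "g (Suc 0) = \<one>"
  using g_1 by simp

lemma g_closed: "i \<in> {1..n} \<Longrightarrow> g i \<in> carrier G"
  using g_nontrivial by (cases "i = 1") auto

lemma C_same [simp]: "C k k = g k"
  and C_other [simp]: "k \<noteq> j \<Longrightarrow> C k j = \<one>"
  and C_Suc_0_left [simp]: "C (Suc 0) j = \<one>"
  and C_Suc_0_right [simp]: "C k (Suc 0) = \<one>"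
  using C_diagonal by auto

lemma C_closed: "k \<in> {1..n} \<Longrightarrow> C k j \<in> carrier G"
  using g_closed by (cases "k = j") auto

lemma rees_mult_simp [simp]: "rees_mult G C (i, a, j) (k, b, l) = (i, a \<otimes> C j k \<otimes> b, l)"
  by (simp add: rees_mult_def)

lemma mem_rees_carrier [simp]:
  "(i, a, j) \<in> rees_carrier G n \<longleftrightarrow> i \<in> {1..n} \<and> a \<in> carrier G \<and> j \<in> {1..n}"
  by (auto simp: rees_carrier_def)

definition induced_points :: "'x set \<Rightarrow> ('x \<Rightarrow> 'a \<Rightarrow> 'x) \<Rightarrow> ('x \<times> nat) set" where
  "induced_points X act = (SIGMA x:X. {k \<in> {1..n}. k = 1 \<or> act x (g k) \<noteq> x})"

definition induced_degree :: "'x set \<Rightarrow> ('x \<Rightarrow> 'a \<Rightarrow> 'x) \<Rightarrow> nat" where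
  "induced_degree X act = n * card X - (\<Sum>x\<in>X. card {i \<in> {2..n}. g i \<in> stab G act x})"

lemma card_induced_points:
  assumes "finite X"
  shows "card (induced_points X act) = induced_degree X act"
proof -
  define F where "F x = {i \<in> {2..n}. g i \<in> stab G act x}" for x
  have F_le: "card (F x) \<le> n" for x
  proof -
    have "card (F x) \<le> card {2..n}" by (rule card_mono) (auto simp: F_def)
    then show ?thesis by simp
  qed
  have "{k \<in> {1..n}. k = 1 \<or> act x (g k) \<noteq> x} = {1..n} - F x" for x
    using g_nontrivial by (auto simp: F_def stab_def)
  moreover have "card ({1..n} - F x) = n - card (F x)" for x
    by (subst card_Diff_subset) (auto simp: F_def)
  ultimately have "card {k \<in> {1..n}. k = 1 \<or> act x (g k) \<noteq> x} = n - card (F x)" for x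
    by simp
  then have "card (induced_points X act) = (\<Sum>x\<in>X. n - card (F x))"
    using assms by (simp add: induced_points_def card_SigmaI)
  also have "\<dots> = n * card X - (\<Sum>x\<in>X. card (F x))"
    using F_le by (simp add: sum_subtractf_nat mult.commute)
  finally show ?thesis by (simp add: induced_degree_def F_def)
qed

lemma faithful_action_of_rees_partial_rep:
  assumes "faithful_partial_rep (rees_carrier G n) (rees_mult G C) m \<phi>"
  obtains X act where "X \<subseteq> {..<m}" "faithful_right_action G X act"
    "\<And>k j x. k \<in> {1..n} \<Longrightarrow> j \<in> {1..n} \<Longrightarrow> x \<in> X \<Longrightarrow>
      Option.bind (\<phi> (1, \<one>, k) x) (\<phi> (j, \<one>, 1)) = Some (act x (C k j))"
proof -
  have partial: "is_partial_transf m (\<phi> s)" if "s \<in> rees_carrier G n" for s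
    using assms that by (simp add: faithful_partial_rep_def)
  have inj: "inj_on \<phi> (rees_carrier G n)"
    using assms by (simp add: faithful_partial_rep_def)
  have hom: "\<phi> (rees_mult G C s t) = pcomp (\<phi> s) (\<phi> t)"
    if "s \<in> rees_carrier G n" "t \<in> rees_carrier G n" for s t
    using assms that by (simp add: faithful_partial_rep_def)
  have one_in: "1 \<in> {1..n}" using two_le_n by simp
  define E where "E a = \<phi> (1, a, 1)" for a
  have "inj_on E (carrier G)"
    using inj_onD[OF inj] one_in by (auto simp: E_def intro!: inj_onI)
  moreover have "E (a \<otimes> b) = pcomp (E a) (E b)" if "a \<in> carrier G" "b \<in> carrier G" for a b
    using hom[of "(1, a, 1)" "(1, b, 1)"] that one_in by (simp add: E_def)
  moreover have "is_partial_transf m (E a)" if "a \<in> carrier G" for a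
    using partial that one_in by (simp add: E_def)
  ultimately obtain X act where "X \<subseteq> {..<m}" "faithful_right_action G X act"
    and E_act: "\<And>a x. a \<in> carrier G \<Longrightarrow> x \<in> X \<Longrightarrow> E a x = Some (act x a)"
    using faithful_action_of_partial_hom by metis
  moreover have "Option.bind (\<phi> (1, \<one>, k) x) (\<phi> (j, \<one>, 1)) = Some (act x (C k j))"
    if "k \<in> {1..n}" "j \<in> {1..n}" "x \<in> X" for k j x
    using hom[of "(1, \<one>, k)" "(j, \<one>, 1)"] E_act[of "C k j" x] that one_in C_closed
    by (simp add: E_def pcomp_def)
  ultimately show ?thesis using that by blast
qed

lemma card_induced_points_le:
  assumes action: "right_action G X act"
    and partial: "\<And>k. k \<in> {1..n} \<Longrightarrow> is_partial_transf m (L k)"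
    and through: "\<And>k j x. k \<in> {1..n} \<Longrightarrow> j \<in> {1..n} \<Longrightarrow> x \<in> X \<Longrightarrow>
      Option.bind (L k x) (R j) = Some (act x (C k j))"
  shows "card (induced_points X act) \<le> m"
proof -
  have one_in: "1 \<in> {1..n}" using two_le_n by simp
  define \<psi> where "\<psi> k x = the (L k x)" for k x
  have \<psi>: "L k x = Some (\<psi> k x)" "\<psi> k x < m" if k: "k \<in> {1..n}" and x: "x \<in> X" for k x
  proof -
    obtain y where y: "L k x = Some y"
      using through[OF k one_in x] by (cases "L k x") auto
    then show "L k x = Some (\<psi> k x)" by (simp add: \<psi>_def)
    show "\<psi> k x < m"
      using y partial[OF k] by (simp add: \<psi>_def is_partial_transf_def)
  qed
  have \<psi>_eq: "act x (C k j) = act y (C l j)"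
    if "k \<in> {1..n}" "l \<in> {1..n}" "j \<in> {1..n}" "x \<in> X" "y \<in> X" "\<psi> k x = \<psi> l y" for k l j x y
    using through[of k j x] through[of l j y] \<psi>(1)[of k x] \<psi>(1)[of l y] that by simp
  have "inj_on (\<lambda>(x, k). \<psi> k x) (induced_points X act)"
  proof (rule inj_onI, clarify)
    fix x k y l
    assume p: "(x, k) \<in> induced_points X act" and q: "(y, l) \<in> induced_points X act"
      and eq: "\<psi> k x = \<psi> l y"
    have k: "k \<in> {1..n}" "x \<in> X" "k = 1 \<or> act x (g k) \<noteq> x"
      and l: "l \<in> {1..n}" "y \<in> X" "l = 1 \<or> act y (g l) \<noteq> y"
      using p q by (auto simp: induced_points_def)
    have "act x \<one> = act y \<one>"
      using \<psi>_eq[OF k(1) l(1) one_in k(2) l(2) eq] by simp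
    then have "x = y"
      using action k(2) l(2) by (simp add: right_action_def)
    moreover have "k = l"
    proof (rule ccontr)
      assume "k \<noteq> l"
      then have "act x (g k) = act x \<one>" "act x \<one> = act x (g l)"
        using \<psi>_eq[OF k(1) l(1) k(1) k(2) l(2) eq] \<psi>_eq[OF k(1) l(1) l(1) k(2) l(2) eq] \<open>x = y\<close>
        by (simp_all add: eq_commute[of l k])
      then have "act x (g k) = x" "act x (g l) = x"
        using action k(2) by (simp_all add: right_action_def)
      then show False using k(3) l(3) \<open>x = y\<close> \<open>k \<noteq> l\<close> by auto
    qed
    ultimately show "x = y \<and> k = l" by simp
  qed
  moreover have "(\<lambda>(x, k). \<psi> k x) ` induced_points X act \<subseteq> {..<m}"
    using \<psi>(2) by (auto simp: induced_points_def)
  ultimately have "card (induced_points X act) \<le> card {..<m}"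
    by (rule card_inj_on_le) simp
  then show ?thesis by simp
qed

lemma induced_degree_le_of_partial_rep:
  assumes "faithful_partial_rep (rees_carrier G n) (rees_mult G C) m \<phi>"
  obtains X :: "nat set" and act
  where "finite X" "faithful_right_action G X act" "induced_degree X act \<le> m"
proof -
  obtain X act where X: "X \<subseteq> {..<m}" and faithful: "faithful_right_action G X act"
    and through: "\<And>k j x. k \<in> {1..n} \<Longrightarrow> j \<in> {1..n} \<Longrightarrow> x \<in> X \<Longrightarrow>
      Option.bind (\<phi> (1, \<one>, k) x) (\<phi> (j, \<one>, 1)) = Some (act x (C k j))"
    using faithful_action_of_rees_partial_rep[OF assms] by blast
  have "is_partial_transf m (\<phi> (1, \<one>, k))" if "k \<in> {1..n}" for k
    using assms that two_le_n by (simp add: faithful_partial_rep_def)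
  moreover have "right_action G X act"
    using faithful by (simp add: faithful_right_action_def)
  ultimately have "card (induced_points X act) \<le> m"
    using card_induced_points_le[where L = "\<lambda>k. \<phi> (1, \<one>, k)" and R = "\<lambda>j. \<phi> (j, \<one>, 1)"]
      through by blast
  moreover have "finite X"
    using X finite_subset by blast
  ultimately show ?thesis
    using that[OF _ faithful] card_induced_points[of X act] by simp
qed

definition shift_point :: "('x \<Rightarrow> 'a \<Rightarrow> 'x) \<Rightarrow> 'x \<times> nat \<Rightarrow> nat \<times> 'a \<times> nat \<Rightarrow> 'x \<times> nat" where
  "shift_point act = (\<lambda>(x, k) (j, a, l). (act x (C k j \<otimes> a), l))"

definition fold_point :: "('x \<Rightarrow> 'a \<Rightarrow> 'x) \<Rightarrow> 'x \<times> nat \<Rightarrow> 'x \<times> nat" where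
  "fold_point act = (\<lambda>(y, l). if act y (g l) = y then (y, 1) else (y, l))"

definition induced_action :: "('x \<Rightarrow> 'a \<Rightarrow> 'x) \<Rightarrow> 'x \<times> nat \<Rightarrow> nat \<times> 'a \<times> nat \<Rightarrow> 'x \<times> nat" where
  "induced_action act p s = fold_point act (shift_point act p s)"

lemma shift_point_simp [simp]: "shift_point act (x, k) (j, a, l) = (act x (C k j \<otimes> a), l)"
  by (simp add: shift_point_def)

lemma fold_point_mem:
  "x \<in> X \<Longrightarrow> l \<in> {1..n} \<Longrightarrow> fold_point act (x, l) \<in> induced_points X act"
  using two_le_n by (auto simp: fold_point_def induced_points_def)

lemma shift_fold_point:
  assumes "right_action G X act" "x \<in> X" "k \<in> {1..n}" "a \<in> carrier G"
  shows "shift_point act (fold_point act (x, k)) (j, a, l) = shift_point act (x, k) (j, a, l)"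
proof (cases "act x (g k) = x")
  case True
  have "act x (C k j \<otimes> a) = act x a"
  proof (cases "j = k")
    case True
    have "act x (g k \<otimes> a) = act (act x (g k)) a"
      using assms g_closed by (simp add: right_action_def)
    then show ?thesis using True \<open>act x (g k) = x\<close> by simp
  next
    case False
    then show ?thesis using assms by (simp add: eq_commute[of j k])
  qed
  then show ?thesis using True assms by (simp add: fold_point_def)
qed (simp add: fold_point_def)

lemma shift_shift_point:
  assumes "right_action G X act" "x \<in> X" "k \<in> {1..n}" "l \<in> {1..n}"
    "a \<in> carrier G" "b \<in> carrier G"
  shows "shift_point act (shift_point act (x, k) (j, a, l)) (j', b, l') =
    shift_point act (x, k) (rees_mult G C (j, a, l) (j', b, l'))"
  using assms C_closed[of k j] C_closed[of l j'] by (simp add: right_action_def m_assoc)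

lemma induced_action_mem:
  assumes "right_action G X act" "p \<in> induced_points X act" "s \<in> rees_carrier G n"
  shows "induced_action act p s \<in> induced_points X act"
proof -
  obtain x k where p: "p = (x, k)" "x \<in> X" "k \<in> {1..n}"
    using assms(2) by (auto simp: induced_points_def)
  obtain j a l where s: "s = (j, a, l)" "a \<in> carrier G" "l \<in> {1..n}"
    using assms(3) by (auto simp: rees_carrier_def)
  then have "act x (C k j \<otimes> a) \<in> X"
    using assms(1) p C_closed by (simp add: right_action_def)
  then show ?thesis
    using fold_point_mem p s by (simp add: induced_action_def)
qed

lemma induced_action_mult:
  assumes "right_action G X act" "p \<in> induced_points X act"
    "s \<in> rees_carrier G n" "t \<in> rees_carrier G n"
  shows "induced_action act (induced_action act p s) t = induced_action act p (rees_mult G C s t)"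
proof -
  obtain x k where p: "p = (x, k)" "x \<in> X" "k \<in> {1..n}"
    using assms(2) by (auto simp: induced_points_def)
  obtain j a l j' b l' where st: "s = (j, a, l)" "t = (j', b, l')"
    and "a \<in> carrier G" "b \<in> carrier G" "l \<in> {1..n}"
    using assms(3,4) by (auto simp: rees_carrier_def)
  have "act x (C k j \<otimes> a) \<in> X"
    using assms(1) p C_closed \<open>a \<in> carrier G\<close> by (simp add: right_action_def)
  then show ?thesis
    using shift_fold_point[OF assms(1) _ \<open>l \<in> {1..n}\<close> \<open>b \<in> carrier G\<close>]
      shift_shift_point[OF assms(1) p(2,3) \<open>l \<in> {1..n}\<close> \<open>a \<in> carrier G\<close> \<open>b \<in> carrier G\<close>]
    by (simp add: induced_action_def p st)
qed

lemma fst_fold_point [simp]: "fst (fold_point act p) = fst p"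
  by (cases p) (simp add: fold_point_def)

lemma column_eq_of_fold_point_eq:
  assumes "faithful_right_action G X act" "l\<^sub>1 \<in> {2..n}"
    and "\<forall>y\<in>X. fold_point act (y, l\<^sub>1) = fold_point act (y, l\<^sub>2)"
  shows "l\<^sub>1 = l\<^sub>2"
proof -
  obtain y where "y \<in> X" "act y (g l\<^sub>1) \<noteq> y"
    using faithful_right_action_moves[OF assms(1)] g_nontrivial assms(2) by blast
  then show ?thesis
    using assms(2,3) by (auto simp: fold_point_def split: if_splits)
qed

lemma row_eq_of_induced_action_eq:
  assumes faithful: "faithful_right_action G X act" and j\<^sub>1: "j\<^sub>1 \<in> {2..n}" and a: "a \<in> carrier G"
    and acts: "\<forall>p\<in>induced_points X act.
      induced_action act p (j\<^sub>1, a, l) = induced_action act p (j\<^sub>2, a, l)"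
  shows "j\<^sub>1 = j\<^sub>2"
proof (rule ccontr)
  assume "j\<^sub>1 \<noteq> j\<^sub>2"
  have action: "right_action G X act"
    using faithful by (simp add: faithful_right_action_def)
  obtain x where x: "x \<in> X" "act x (g j\<^sub>1) \<noteq> x"
    using faithful_right_action_moves[OF faithful] g_nontrivial j\<^sub>1 by blast
  then have "(x, j\<^sub>1) \<in> induced_points X act"
    using j\<^sub>1 by (simp add: induced_points_def)
  have g_j\<^sub>1: "g j\<^sub>1 \<in> carrier G"
    using g_nontrivial j\<^sub>1 by blast
  have "act (act x (g j\<^sub>1)) a = act x (g j\<^sub>1 \<otimes> a)"
    using action x(1) a g_j\<^sub>1 by (simp add: right_action_def)
  also have "\<dots> = fst (induced_action act (x, j\<^sub>1) (j\<^sub>1, a, l))"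
    by (simp add: induced_action_def)
  also have "\<dots> = fst (induced_action act (x, j\<^sub>1) (j\<^sub>2, a, l))"
    using acts \<open>(x, j\<^sub>1) \<in> induced_points X act\<close> by simp
  also have "\<dots> = act x a"
    using \<open>j\<^sub>1 \<noteq> j\<^sub>2\<close> a by (simp add: induced_action_def)
  finally have "act x (g j\<^sub>1) = x"
    using right_action_inj[OF action _ x(1) a] action x(1) g_j\<^sub>1
    by (simp add: right_action_def)
  then show False using x(2) by simp
qed

lemma induced_action_faithful:
  assumes faithful: "faithful_right_action G X act"
    and "s \<in> rees_carrier G n" "s' \<in> rees_carrier G n"
    and eq: "\<And>p. p \<in> induced_points X act \<Longrightarrow> induced_action act p s = induced_action act p s'"
  shows "s = s'"
proof -
  have action: "right_action G X act"
    using faithful by (simp add: faithful_right_action_def)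
  obtain j a l j' a' l' where s: "s = (j, a, l)" "s' = (j', a', l')"
    and j: "j \<in> {1..n}" "j' \<in> {1..n}" and a: "a \<in> carrier G" "a' \<in> carrier G"
    and l: "l \<in> {1..n}" "l' \<in> {1..n}"
    using assms(2,3) by (auto simp: rees_carrier_def)
  have base_in: "(x, 1) \<in> induced_points X act" if "x \<in> X" for x
    using that two_le_n by (simp add: induced_points_def)
  have base: "induced_action act (x, 1) (i, b, m) = fold_point act (act x b, m)"
    if "b \<in> carrier G" for x i b m
    using that by (simp add: induced_action_def)
  have "a = a'"
  proof (rule faithful_right_action_eqI[OF faithful a])
    fix x assume "x \<in> X"
    then show "act x a = act x a'"
      using eq[OF base_in, of x] base a s by (metis fst_conv fst_fold_point)
  qed
  have "fold_point act (y, l) = fold_point act (y, l')" if "y \<in> X" for y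
  proof -
    define x where "x = act y (inv a)"
    have "x \<in> X" "act x a = y"
      using action that a right_action_inv_cancel(2)[OF action that a(1)]
      by (simp_all add: x_def right_action_def)
    then show ?thesis
      using eq[OF base_in[OF \<open>x \<in> X\<close>]] base a s \<open>a = a'\<close> by simp
  qed
  then have "l = l'"
    using column_eq_of_fold_point_eq[OF faithful, of l l'] column_eq_of_fold_point_eq[OF faithful, of l' l] l
    by (cases "l = 1"; cases "l' = 1") auto
  have "j = j'"
    using row_eq_of_induced_action_eq[OF faithful _ a(1), of j l j']
      row_eq_of_induced_action_eq[OF faithful _ a(1), of j' l j] eq s \<open>a = a'\<close> \<open>l = l'\<close> j
    by (cases "j = 1"; cases "j' = 1") auto
  show ?thesis using s \<open>a = a'\<close> \<open>l = l'\<close> \<open>j = j'\<close> by simp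
qed

lemma faithful_total_rep_of_induced_degree:
  assumes "finite X" "faithful_right_action G X act"
  shows "\<exists>\<phi>. faithful_total_rep (rees_carrier G n) (rees_mult G C) (induced_degree X act) \<phi>"
proof -
  have action: "right_action G X act"
    using assms(2) by (simp add: faithful_right_action_def)
  have "finite (induced_points X act)"
    using assms(1) by (simp add: induced_points_def)
  moreover have "induced_action act p s \<in> induced_points X act"
    if "p \<in> induced_points X act" "s \<in> rees_carrier G n" for p s
    using that by (rule induced_action_mem[OF action])
  ultimately show ?thesis
    using faithful_total_rep_of_finite_action[where A = "induced_action act"]
      induced_action_mult[OF action] induced_action_faithful[OF assms(2)]
      card_induced_points[OF assms(1)]
    by metis
qed

lemma min_degrees_eq_Least_induced_degree:
  assumes "finite (carrier G)"
  shows "min_partial_degree (rees_carrier G n) (rees_mult G C) =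
      (LEAST k. \<exists>(X :: nat set) act. finite X \<and> faithful_right_action G X act \<and> k = induced_degree X act)
    \<and> min_total_degree (rees_carrier G n) (rees_mult G C) =
      (LEAST k. \<exists>(X :: nat set) act. finite X \<and> faithful_right_action G X act \<and> k = induced_degree X act)"
proof -
  obtain X :: "nat set" and act where "finite X" "faithful_right_action G X act"
    using finite_faithful_action_on_nat[OF assms] by blast
  then have "\<exists>(Y :: nat set) act'. finite Y \<and> faithful_right_action G Y act' \<and>
      induced_degree X act = induced_degree Y act'"
    by blast
  then show ?thesis
  proof (rule min_degrees_eq_Least)
    fix k
    assume "\<exists>(X :: nat set) act. finite X \<and> faithful_right_action G X act \<and> k = induced_degree X act"
    then show "\<exists>\<phi>. faithful_total_rep (rees_carrier G n) (rees_mult G C) k \<phi>"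
      using faithful_total_rep_of_induced_degree by auto
  next
    fix m \<phi> assume "faithful_partial_rep (rees_carrier G n) (rees_mult G C) m \<phi>"
    then obtain X :: "nat set" and act
      where "finite X" "faithful_right_action G X act" "induced_degree X act \<le> m"
      by (rule induced_degree_le_of_partial_rep)
    then show "\<exists>k. (\<exists>(X :: nat set) act. finite X \<and> faithful_right_action G X act \<and>
        k = induced_degree X act) \<and> k \<le> m"
      by blast
  qed
qed

lemma induced_degree_if_constant:
  assumes "\<forall>i\<in>{2..n}. g i = g 2"
  shows "induced_degree X act = n * card X - (n - 1) * card {x \<in> X. act x (g 2) = x}"
proof (cases "finite X")
  case True
  have "g 2 \<in> carrier G" using g_nontrivial two_le_n by auto
  have "g i \<in> stab G act x \<longleftrightarrow> act x (g 2) = x" if "i \<in> {2..n}" for i x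
  proof -
    have "g i = g 2" using assms that by blast
    then show ?thesis using \<open>g 2 \<in> carrier G\<close> by (simp add: stab_def)
  qed
  then have "{i \<in> {2..n}. g i \<in> stab G act x} = (if act x (g 2) = x then {2..n} else {})" for x
    by auto
  then have "card {i \<in> {2..n}. g i \<in> stab G act x} = (if act x (g 2) = x then n - 1 else 0)" for x
    by simp
  then have "(\<Sum>x\<in>X. card {i \<in> {2..n}. g i \<in> stab G act x}) =
      (\<Sum>x\<in>X. if act x (g 2) = x then n - 1 else 0)"
    by simp
  also have "\<dots> = (n - 1) * card {x \<in> X. act x (g 2) = x}"
    using True by (simp add: sum.If_cases Int_def)
  finally show ?thesis by (simp add: induced_degree_def)
qed (simp add: induced_degree_def) \<comment> \<open>for infinite \<open>X\<close> both sides are \<open>0\<close>, as \<open>card X = 0\<close>\<close>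

end

theorem proposition2p16:
  fixes G :: "('a, 'b) monoid_scheme" and n :: nat and g :: "nat \<Rightarrow> 'a"
    and C :: "nat \<Rightarrow> nat \<Rightarrow> 'a"
  assumes "group G" and "finite (carrier G)" and "n \<ge> 2"
    and "g 1 = \<one>\<^bsub>G\<^esub>"
    and "\<forall>i\<in>{2..n}. g i \<in> carrier G \<and> g i \<noteq> \<one>\<^bsub>G\<^esub>"
    and "\<forall>i j. C i j = (if i = j then g i else \<one>\<^bsub>G\<^esub>)"
  shows "min_partial_degree (rees_carrier G n) (rees_mult G C) =
           (LEAST k. \<exists>(X :: nat set) act. finite X \<and> faithful_right_action G X act \<and>
              k = n * card X - (\<Sum>x\<in>X. card {i \<in> {2..n}. g i \<in> stab G act x}))
       \<and> min_total_degree (rees_carrier G n) (rees_mult G C) =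
           (LEAST k. \<exists>(X :: nat set) act. finite X \<and> faithful_right_action G X act \<and>
              k = n * card X - (\<Sum>x\<in>X. card {i \<in> {2..n}. g i \<in> stab G act x}))
       \<and> ((\<forall>i\<in>{2..n}. g i = g 2) \<longrightarrow>
           min_partial_degree (rees_carrier G n) (rees_mult G C) =
             (LEAST k. \<exists>(X :: nat set) act. finite X \<and> faithful_right_action G X act \<and>
                k = n * card X - (n - 1) * card {x \<in> X. act x (g 2) = x})
         \<and> min_total_degree (rees_carrier G n) (rees_mult G C) =
             (LEAST k. \<exists>(X :: nat set) act. finite X \<and> faithful_right_action G X act \<and>
                k = n * card X - (n - 1) * card {x \<in> X. act x (g 2) = x}))"
proof -
  interpret diagonal_rees G n g C
    using assms by (intro diagonal_rees.intro diagonal_rees_axioms.intro) auto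
  have uniform: "(\<forall>i\<in>{2..n}. g i = g 2) \<longrightarrow>
      (LEAST k. \<exists>(X :: nat set) act. finite X \<and> faithful_right_action G X act \<and> k = induced_degree X act)
      = (LEAST k. \<exists>(X :: nat set) act. finite X \<and> faithful_right_action G X act \<and>
          k = n * card X - (n - 1) * card {x \<in> X. act x (g 2) = x})"
    (is "_ \<longrightarrow> ?L = ?R")
  proof
    assume "\<forall>i\<in>{2..n}. g i = g 2"
    show "?L = ?R"
      unfolding induced_degree_if_constant[OF \<open>\<forall>i\<in>{2..n}. g i = g 2\<close>] ..
  qed
  note degrees = min_degrees_eq_Least_induced_degree[OF assms(2)]
  show ?thesis
    unfolding degrees[THEN conjunct1] degrees[THEN conjunct2]
    using uniform unfolding induced_degree_def by blast
qed

end
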